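(* For every $M\in[\mathbb N]$, every $\epsilon>0$ and all ordinals $\zeta<\xi<\omega_1$, there exists $N\in[M]$ such that $\|\xi_n^L\|_\zeta<\epsilon$ for all $L\in[N]$ and all $n\in\mathbb N$.
   Context: $[M]$ is the set of infinite subsets of $M$, enumerated increasingly $M=(m_n)$. For each countable ordinal $\xi$ fix successor ordinals $(\beta_n(\xi)+1)_n$: equal to $\xi$ if $\xi$ is a successor, strictly increasing to $\xi$ if $\xi$ is a limit. Schreier families: $S_0=\{\{n\}:n\in\mathbb N\}\cup\{\emptyset\}$; $S_{\zeta+1}=\{\bigcup_{i=1}^nF_i:n\le\min F_1,\ F_1<\cdots<F_n,\ F_i\in S_\zeta\}\cup\{\emptyset\}$ ($F<G$ means $\max F<\min G$); for limit $\xi$, $S_\xi=\{F:F\in S_{\beta_n(\xi)+1}\text{ for some }n\le\min F\}$. For a signed measure $\mu$ on $\mathbb N$, $\|\mu\|_\zeta=\sup\{|\mu|(F):F\in S_\zeta\}$. Repeated averages: identify $\ell_1$ with signed measures on $\mathbb N$ with unit vector basis $(e_n)$. For $\xi<\omega_1$ and $M=(m_n)\in[\mathbb N]$ define finitely supported probability measures $\xi_n^M$ by transfinite induction: $0_n^M=e_{m_n}$. If $\xi=\zeta+1$: $\xi_1^M=\frac1{m_1}\sum_{i=1}^{m_1}\zeta_i^M$; given $\xi_n^M$, let $M_n=\{m\in M:m>\max\operatorname{supp}\xi_n^M\}$, $k_n=\min M_n$, $\xi_{n+1}^M=\frac1{k_n}\sum_{i=1}^{k_n}\zeta_i^{M_n}$.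 If $\xi$ is a limit: $\xi_1^M=[\beta_{m_1}(\xi)+1]_1^M$ and $\xi_{n+1}^M=[\beta_{k_n}(\xi)+1]_1^{M_n}$ with $M_n,k_n$ as before ($[\gamma]_1^P$ is the first measure of order $\gamma$ for the set $P$). *)

theory Defs
  imports "HOL-Analysis.Analysis" "HOL-Library.Infinite_Set"
begin

text \<open>Natural numbers are N = {1,2,...}; [A] is the set of infinite subsets of A.\<close>
definition posnat :: "nat set" where "posnat = {n. 1 \<le> n}"

definition inf_subsets :: "nat set \<Rightarrow> nat set set" where
  "inf_subsets A = {N. N \<subseteq> A \<and> infinite N}"

definition ozero :: "'o::wellorder" where "ozero = (LEAST x. True)"
definition osucc :: "'o::wellorder \<Rightarrow> 'o" where "osucc g = (LEAST x. g < x)"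
definition is_succ :: "'o::wellorder \<Rightarrow> bool" where
  "is_succ x = (\<exists>g. g < x \<and> x = osucc g)"
definition opred :: "'o::wellorder \<Rightarrow> 'o" where
  "opred x = (THE g. g < x \<and> x = osucc g)"
definition is_limit :: "'o::wellorder \<Rightarrow> bool" where
  "is_limit x = (x \<noteq> ozero \<and> \<not> is_succ x)"

definition fund_seq :: "('o::wellorder \<Rightarrow> nat \<Rightarrow> 'o) \<Rightarrow> bool" where
  "fund_seq beta =
    ((\<forall>x n. is_succ x \<and> 1 \<le> n \<longrightarrow> osucc (beta x n) = x) \<and>
     (\<forall>x. is_limit x \<longrightarrow>
        (\<forall>n\<ge>1. osucc (beta x n) < osucc (beta x (Suc n))) \<and>
        (\<forall>n\<ge>1. osucc (beta x n) < x) \<and>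
        (\<forall>g<x. \<exists>n\<ge>1. g < osucc (beta x n))))"

definition schreier_step ::
  "('o::wellorder \<Rightarrow> nat \<Rightarrow> 'o) \<Rightarrow> ('o \<Rightarrow> nat set set) \<Rightarrow> 'o \<Rightarrow> nat set set" where
  "schreier_step beta f x =
    (if x = ozero then {{n} | n. n \<in> posnat} \<union> {{}}
     else if is_succ x then
       {\<Union> (set Fs) | Fs. Fs \<noteq> [] \<and> length Fs \<le> Min (hd Fs)
            \<and> sorted_wrt (\<lambda>F G. Max F < Min G) Fs
            \<and> (\<forall>F\<in>set Fs. F \<in> f (opred x) \<and> F \<noteq> {})} \<union> {{}}
     else {F. F \<noteq> {} \<and> (\<exists>n. 1 \<le> n \<and> n \<le> Min F \<and> F \<in> f (osucc (beta x n)))} \<union> {{}})"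

definition schreier :: "('o::wellorder \<Rightarrow> nat \<Rightarrow> 'o) \<Rightarrow> 'o \<Rightarrow> nat set set" where
  "schreier beta = wfrec {(x, y). x < y} (schreier_step beta)"

text \<open>Signed measures on N are represented by their densities nat => real;
  |mu|(F) = sum over F of |mu i|.\<close>
definition schreier_norm ::
  "('o::wellorder \<Rightarrow> nat \<Rightarrow> 'o) \<Rightarrow> 'o \<Rightarrow> (nat \<Rightarrow> real) \<Rightarrow> real" where
  "schreier_norm beta z mu = (SUP F \<in> schreier beta z. \<Sum>i\<in>F. \<bar>mu i\<bar>)"

definition unitvec :: "nat \<Rightarrow> nat \<Rightarrow> real" where
  "unitvec m = (\<lambda>i. if i = m then 1 else 0)"

definition msupp :: "(nat \<Rightarrow> real) \<Rightarrow> nat set" where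
  "msupp mu = {i. mu i \<noteq> 0}"

definition minset :: "nat set \<Rightarrow> nat" where
  "minset P = (LEAST m. m \<in> P)"

text \<open>Given g (P |-> first measure built from P), the sets M_n:
  M_0 = M, M_n = {m in M. m > max supp xi_n^M}, where xi_n^M = g (M_{n-1}).\<close>
primrec msets :: "(nat set \<Rightarrow> nat \<Rightarrow> real) \<Rightarrow> nat set \<Rightarrow> nat \<Rightarrow> nat set" where
  "msets g M 0 = M"
| "msets g M (Suc n) = {m \<in> M. Max (msupp (g (msets g M n))) < m}"

text \<open>Repeated averages: ravg beta xi M n is xi_n^M (n >= 1), by transfinite recursion.\<close>
definition ravg_step ::
  "('o::wellorder \<Rightarrow> nat \<Rightarrow> 'o) \<Rightarrow> ('o \<Rightarrow> nat set \<Rightarrow> nat \<Rightarrow> nat \<Rightarrow> real)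
     \<Rightarrow> 'o \<Rightarrow> nat set \<Rightarrow> nat \<Rightarrow> nat \<Rightarrow> real" where
  "ravg_step beta f x M n =
    (if x = ozero then unitvec (enumerate M (n - 1))
     else if is_succ x then
       (let g = (\<lambda>P. (\<lambda>j. (1 / real (minset P)) *
                   (\<Sum>i = 1..minset P. f (opred x) P i j)))
        in g (msets g M (n - 1)))
     else
       (let g = (\<lambda>P. f (osucc (beta x (minset P))) P 1)
        in g (msets g M (n - 1))))"

definition ravg :: "('o::wellorder \<Rightarrow> nat \<Rightarrow> 'o) \<Rightarrow> 'o \<Rightarrow> nat set \<Rightarrow> nat \<Rightarrow> nat \<Rightarrow> real" where
  "ravg beta = wfrec {(x, y). x < y} (ravg_step beta)"

end

theory Submission
  imports Defs
begin

text \<open>By transfinite induction on \<open>\<xi>\<close> we show the Ramsey-type statement that for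
  \<open>\<zeta> < \<xi>\<close> and \<open>\<epsilon> > 0\<close> every \<open>M\<close> contains an \<open>N\<close> with \<open>\<xi>\<^sub>1\<^sup>T(F) \<le> \<epsilon>\<close> for all
  \<open>T \<in> [N]\<close> and \<open>F \<in> S\<^sub>\<zeta>\<close>; this suffices because every \<open>\<xi>\<^sub>n\<^sup>L\<close> is \<open>\<xi>\<^sub>1\<^sup>T\<close> for a
  tail \<open>T\<close> of \<open>L\<close> and all these measures are nonnegative.

  For \<open>\<xi> = \<eta> + 1\<close>, and for limits \<open>\<xi>\<close> where \<open>\<xi>\<^sub>1\<^sup>L = [\<beta>\<^sub>k + 1]\<^sub>1\<^sup>L\<close> with \<open>k = min L\<close>,
  the measure \<open>\<xi>\<^sub>1\<^sup>L\<close> is the average of \<open>\<eta>\<^sub>1\<^sup>L, \<dots>, \<eta>\<^sub>k\<^sup>L\<close>, which have successive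
  supports. On \<open>F \<in> S\<^sub>\<zeta>\<close> only the first \<open>\<eta>\<^sub>i\<^sup>L\<close> charging \<open>F\<close> can be large: every
  later one is built beyond some \<open>c \<in> L\<close> with \<open>min F \<le> c\<close>, and sets of \<open>S\<^sub>\<zeta>\<close>
  starting below \<open>c\<close> receive little mass from first measures built beyond \<open>c\<close>. For
  \<open>\<zeta> < \<eta>\<close> this is the induction hypothesis; for \<open>\<zeta> = \<eta>\<close> such a set is a union of at
  most \<open>c\<close> sets of \<open>S\<^sub>\<eta>\<^sub>-\<^sub>1\<close>, or lies in \<open>S\<^sub>\<beta>\<^sub>n\<^sub>+\<^sub>1\<close> for some \<open>n \<le> c\<close>. A diagonal
  refinement of \<open>M\<close> makes these bounds hold for all \<open>c\<close> at once, and \<open>min N > 2/\<epsilon>\<close>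
  bounds the average by \<open>1/k + \<epsilon>/2 \<le> \<epsilon>\<close>.\<close>

section \<open>Successors, limits and fundamental sequences\<close>

lemma ozero_le [simp]: "ozero \<le> (x::'o::wellorder)"
  unfolding ozero_def by (rule Least_le) simp

lemma osucc_le: "(g::'o::wellorder) < y \<Longrightarrow> osucc g \<le> y"
  unfolding osucc_def by (rule Least_le)

lemma less_osucc: "(g::'o::wellorder) < y \<Longrightarrow> g < osucc g"
  unfolding osucc_def by (rule LeastI)

lemma less_osucc_imp_le: "(z::'o::wellorder) < osucc g \<Longrightarrow> z \<le> g"
  using osucc_le[of g z] by (metis leD leI)

lemma osucc_inject:
  assumes "(g::'o::wellorder) < osucc g" "h < osucc h" "osucc g = osucc h"
  shows "g = h"
proof (rule ccontr)
  assume "g \<noteq> h"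
  then consider "g < h" | "h < g"
    by fastforce
  then show False
  proof cases
    case 1
    then have "osucc g \<le> h"
      by (rule osucc_le)
    then show False
      using assms(2,3) by simp
  next
    case 2
    then have "osucc h \<le> g"
      by (rule osucc_le)
    then show False
      using assms(1,3) by simp
  qed
qed

lemma is_succ_opred:
  assumes "is_succ (x::'o::wellorder)"
  shows "opred x < x" and "osucc (opred x) = x"
proof -
  obtain g where g: "g < x" "x = osucc g"
    using assms unfolding is_succ_def by blast
  have unique: "h = g" if "h < x" "x = osucc h" for h
    by (rule osucc_inject) (use g that in \<open>simp_all only:\<close>)
  have "opred x = g"
    unfolding opred_def by (rule the_equality) (use g unique in blast)+
  then show "opred x < x" "osucc (opred x) = x"
    using g by simp_all
qed

lemma is_succ_osucc:
  assumes "(g::'o::wellorder) < osucc g"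
  shows "is_succ (osucc g)" and "opred (osucc g) = g"
proof -
  show succ: "is_succ (osucc g)"
    using assms unfolding is_succ_def by blast
  show "opred (osucc g) = g"
    by (rule osucc_inject) (use is_succ_opred[OF succ] assms in simp_all)
qed

lemma is_succ_nonzero:
  assumes "is_succ x"
  shows "x \<noteq> ozero"
  using is_succ_opred(1)[OF assms] ozero_le[of "opred x"] leD by blast

lemma ordinal_cases:
  obtains "x = ozero" | "is_succ x" | "is_limit x"
  unfolding is_limit_def by blast

lemma fund_seq_limit_less:
  "fund_seq beta \<Longrightarrow> is_limit x \<Longrightarrow> 1 \<le> n \<Longrightarrow> osucc (beta x n) < x"
  unfolding fund_seq_def by blast

lemma fund_seq_limit_mono:
  assumes "fund_seq beta" "is_limit x" "1 \<le> a" "a \<le> b"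
  shows "osucc (beta x a) \<le> osucc (beta x b)"
proof -
  have "osucc (beta x (n + a)) \<le> osucc (beta x (Suc n + a))" for n
    using assms(1-3) unfolding fund_seq_def by (simp add: less_imp_le)
  then have "osucc (beta x (0 + a)) \<le> osucc (beta x ((b - a) + a))"
    by (rule lift_Suc_mono_le[of "\<lambda>n. osucc (beta x (n + a))"]) simp
  then show ?thesis
    using assms(4) by simp
qed

text \<open>\<open>beta x a < osucc (beta x a)\<close> fails only if \<open>beta x a\<close> is the largest element of
  the type, where \<open>osucc\<close> is a junk value; strict monotonicity of \<open>osucc \<circ> beta x\<close>
  allows this for at most one index.\<close>
lemma fund_seq_limit_eventually_less_osucc:
  assumes f: "fund_seq beta" and l: "is_limit x"
  obtains a2 where "\<And>a. a2 \<le> a \<Longrightarrow> beta x a < osucc (beta x a)"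
proof (cases "\<exists>b\<ge>1. \<not> beta x b < osucc (beta x b)")
  case True
  then obtain b where b: "1 \<le> b" "\<not> beta x b < osucc (beta x b)"
    by blast
  have "beta x a < osucc (beta x a)" if "Suc b \<le> a" for a
  proof (rule ccontr)
    assume "\<not> beta x a < osucc (beta x a)"
    then have "\<not> beta x a < y" "\<not> beta x b < y" for y
      using b(2) less_osucc by blast+
    then have "beta x a = beta x b"
      by (meson linorder_neqE)
    moreover have "osucc (beta x b) < osucc (beta x (Suc b))"
      using f l b(1) unfolding fund_seq_def by blast
    moreover have "osucc (beta x (Suc b)) \<le> osucc (beta x a)"
      using fund_seq_limit_mono[OF f l _ that] by simp
    ultimately show False
      by simp
  qed
  then show thesis
    using that by blast
next
  case False
  then show thesis
    using that[of 1] by (meson le_trans not_one_le_zero nat_le_linear)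
qed

lemma fund_seq_limit_eventually:
  assumes f: "fund_seq beta" and l: "is_limit x" and z: "z < x"
  obtains a1 where
    "\<And>a. a1 \<le> a \<Longrightarrow> 1 \<le> a \<and> z \<le> beta x a \<and> beta x a < osucc (beta x a) \<and> osucc (beta x a) < x"
proof -
  obtain a0 where a0: "1 \<le> a0" "z < osucc (beta x a0)"
    using f l z unfolding fund_seq_def by blast
  obtain a2 where a2: "\<And>a. a2 \<le> a \<Longrightarrow> beta x a < osucc (beta x a)"
    using fund_seq_limit_eventually_less_osucc[OF f l] by blast
  show thesis
  proof (rule that[of "max a0 a2"])
    fix a assume a: "max a0 a2 \<le> a"
    then have "z < osucc (beta x a)"
      using a0 fund_seq_limit_mono[OF f l a0(1), of a] by simp
    then have "z \<le> beta x a"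
      by (rule less_osucc_imp_le)
    moreover have "1 \<le> a"
      using a a0(1) by simp
    ultimately show "1 \<le> a \<and> z \<le> beta x a \<and> beta x a < osucc (beta x a) \<and> osucc (beta x a) < x"
      using a a2 fund_seq_limit_less[OF f l] by simp
  qed
qed

section \<open>Refinable properties of infinite sets\<close>

lemma inf_subsets_trans: "N \<in> inf_subsets M \<Longrightarrow> T \<in> inf_subsets N \<Longrightarrow> T \<in> inf_subsets M"
  unfolding inf_subsets_def by auto

lemma inf_subsets_self: "M \<in> inf_subsets P \<Longrightarrow> M \<in> inf_subsets M"
  unfolding inf_subsets_def by auto

lemma infinite_tail: "infinite (L::nat set) \<Longrightarrow> infinite {m\<in>L. b < m}"
proof
  assume "infinite L" "finite {m\<in>L. b < m}"
  moreover have "L \<subseteq> {m\<in>L. b < m} \<union> {..b}"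
    by auto
  ultimately show False
    using finite_subset by blast
qed

lemma tail_in_inf_subsets: "L \<in> inf_subsets P \<Longrightarrow> {m\<in>L. b < m} \<in> inf_subsets L"
  unfolding inf_subsets_def using infinite_tail by auto

lemma minset_in:
  assumes "L \<in> inf_subsets P"
  shows "minset L \<in> L"
proof -
  obtain l where "l \<in> L"
    using assms infinite_imp_nonempty unfolding inf_subsets_def by blast
  then show ?thesis
    unfolding minset_def by (rule LeastI)
qed

lemma minset_le: "l \<in> L \<Longrightarrow> minset L \<le> l"
  unfolding minset_def by (rule Least_le)

lemma minset_pos: "L \<in> inf_subsets posnat \<Longrightarrow> 1 \<le> minset L"
  using minset_in[of L posnat] unfolding inf_subsets_def posnat_def by auto

definition refinable :: "(nat set \<Rightarrow> bool) \<Rightarrow> bool" where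
  "refinable R \<longleftrightarrow> (\<forall>M\<in>inf_subsets posnat. \<exists>N\<in>inf_subsets M. \<forall>T\<in>inf_subsets N. R T)"

lemma refinableD:
  "refinable R \<Longrightarrow> M \<in> inf_subsets posnat \<Longrightarrow> \<exists>N\<in>inf_subsets M. \<forall>T\<in>inf_subsets N. R T"
  unfolding refinable_def by blast

lemma refinable_mono:
  assumes "refinable R" and "\<And>T. T \<in> inf_subsets posnat \<Longrightarrow> R T \<Longrightarrow> S T"
  shows "refinable S"
  unfolding refinable_def
proof
  fix M assume M: "M \<in> inf_subsets posnat"
  then obtain N where N: "N \<in> inf_subsets M" "\<forall>T\<in>inf_subsets N. R T"
    using refinableD[OF assms(1)] by blast
  have "S T" if "T \<in> inf_subsets N" for T
    using assms(2) N that M inf_subsets_trans by blast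
  then show "\<exists>N\<in>inf_subsets M. \<forall>T\<in>inf_subsets N. S T"
    using N(1) by blast
qed

lemma refinable_conj:
  assumes "refinable R" and "refinable S"
  shows "refinable (\<lambda>T. R T \<and> S T)"
  unfolding refinable_def
proof
  fix M assume M: "M \<in> inf_subsets posnat"
  obtain N1 where N1: "N1 \<in> inf_subsets M" "\<forall>T\<in>inf_subsets N1. R T"
    using refinableD[OF assms(1) M] by blast
  obtain N2 where N2: "N2 \<in> inf_subsets N1" "\<forall>T\<in>inf_subsets N2. S T"
    using refinableD[OF assms(2)] N1(1) M inf_subsets_trans by blast
  show "\<exists>N\<in>inf_subsets M. \<forall>T\<in>inf_subsets N. R T \<and> S T"
    using N1 N2 inf_subsets_trans by blast
qed

lemma refinable_finite_Ball:
  assumes "finite A" and "\<And>p. p \<in> A \<Longrightarrow> refinable (R p)"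
  shows "refinable (\<lambda>T. \<forall>p\<in>A. R p T)"
  using assms
proof (induction A rule: finite_induct)
  case empty
  show ?case
    unfolding refinable_def using inf_subsets_self by auto
next
  case (insert p A)
  have "refinable (\<lambda>T. R p T \<and> (\<forall>q\<in>A. R q T))"
    using insert by (intro refinable_conj) auto
  then show ?case
    by simp
qed

lemma refinable_tail: "refinable (\<lambda>T. \<forall>t\<in>T. b < t)"
  unfolding refinable_def
proof
  fix M assume "M \<in> inf_subsets posnat"
  then have "{m\<in>M. b < m} \<in> inf_subsets M"
    by (rule tail_in_inf_subsets)
  moreover have "\<forall>T\<in>inf_subsets {m\<in>M. b < m}. \<forall>t\<in>T. b < t"
    unfolding inf_subsets_def by auto
  ultimately show "\<exists>N\<in>inf_subsets M. \<forall>T\<in>inf_subsets N. \<forall>t\<in>T. b < t"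
    by blast
qed

lemma refinable_nested_sequence:
  assumes R: "\<And>c. refinable (R c)" and M: "M \<in> inf_subsets posnat"
  obtains X where "X 0 = M" "\<And>j. X j \<in> inf_subsets posnat"
    "\<And>j. X (Suc j) \<subseteq> {y\<in>X j. minset (X j) < y}"
    "\<And>j T. T \<in> inf_subsets (X (Suc j)) \<Longrightarrow> R (minset (X j)) T"
proof -
  define shrink where "shrink Y = (SOME N. N \<in> inf_subsets {y\<in>Y. minset Y < y} \<and>
      (\<forall>T\<in>inf_subsets N. R (minset Y) T))" for Y
  define X where "X j = (shrink ^^ j) M" for j
  have shrink: "shrink Y \<in> inf_subsets {y\<in>Y. minset Y < y} \<and>
      (\<forall>T\<in>inf_subsets (shrink Y). R (minset Y) T)" if "Y \<in> inf_subsets posnat" for Y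
  proof -
    have "{y\<in>Y. minset Y < y} \<in> inf_subsets posnat"
      using tail_in_inf_subsets[OF that] that inf_subsets_trans by blast
    then obtain N where "N \<in> inf_subsets {y\<in>Y. minset Y < y} \<and>
        (\<forall>T\<in>inf_subsets N. R (minset Y) T)"
      using refinableD[OF R] by blast
    then show ?thesis
      unfolding shrink_def by (rule someI)
  qed
  have X_Suc: "X (Suc j) = shrink (X j)" for j
    unfolding X_def by simp
  have X: "X j \<in> inf_subsets posnat" for j
  proof (induction j)
    case 0
    then show ?case
      using M by (simp add: X_def)
  next
    case (Suc j)
    then show ?case
      using shrink[OF Suc] tail_in_inf_subsets[OF Suc] inf_subsets_trans
      unfolding X_Suc by blast
  qed
  show thesis
  proof (rule that[of X])
    show "X 0 = M"
      by (simp add: X_def)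
    show "X (Suc j) \<subseteq> {y\<in>X j. minset (X j) < y}" for j
      using shrink[OF X[of j]] unfolding X_Suc inf_subsets_def by simp
    show "R (minset (X j)) T" if "T \<in> inf_subsets (X (Suc j))" for j T
      using shrink[OF X[of j]] that unfolding X_Suc by blast
  qed (rule X)
qed

text \<open>Diagonalisation: \<open>N = {a\<^sub>0 < a\<^sub>1 < \<dots>}\<close> with \<open>a\<^sub>j = min X\<^sub>j\<close>; every
  infinite subset of \<open>N\<close> beyond \<open>a\<^sub>j\<close> lies in \<open>X\<^sub>j\<^sub>+\<^sub>1\<close>.\<close>
lemma refinable_diagonal:
  assumes R: "\<And>c. refinable (R c)"
  shows "refinable (\<lambda>T. \<forall>c\<in>T. \<forall>S\<in>inf_subsets T. (\<forall>s\<in>S. c < s) \<longrightarrow> R c S)"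
  unfolding refinable_def
proof
  fix M assume M: "M \<in> inf_subsets posnat"
  obtain X where X0: "X 0 = M" and X: "\<And>j. X j \<in> inf_subsets posnat"
    and X_Suc: "\<And>j. X (Suc j) \<subseteq> {y\<in>X j. minset (X j) < y}"
    and X_R: "\<And>j T. T \<in> inf_subsets (X (Suc j)) \<Longrightarrow> R (minset (X j)) T"
    using refinable_nested_sequence[of R, OF R M] by blast
  define a where "a j = minset (X j)" for j
  have X_antimono: "X i \<subseteq> X j" if "j \<le> i" for i j
    using that by (induction i) (use X_Suc in \<open>auto simp: le_Suc_eq\<close>)
  have a_in: "a j \<in> X j" for j
    unfolding a_def using minset_in[OF X] .
  have "a j < a (Suc j)" for j
    using a_in[of "Suc j"] X_Suc[of j] unfolding a_def by blast
  then have a_mono: "strict_mono a"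
    by (simp add: strict_mono_Suc_iff)
  define N where "N = range a"
  have "a j \<in> M" for j
    using a_in[of j] X_antimono[of 0 j] X0 by blast
  then have "N \<subseteq> M"
    unfolding N_def by blast
  moreover have "infinite N"
    unfolding N_def using a_mono strict_mono_imp_inj_on range_inj_infinite by blast
  ultimately have N: "N \<in> inf_subsets M"
    unfolding inf_subsets_def by simp
  have "R c S" if T: "T \<in> inf_subsets N" and c: "c \<in> T" and S: "S \<in> inf_subsets T"
    and after: "\<forall>s\<in>S. c < s" for T c S
  proof -
    obtain j where j: "c = a j"
      using T c unfolding inf_subsets_def N_def by blast
    have "S \<subseteq> X (Suc j)"
    proof
      fix s assume "s \<in> S"
      then obtain i where i: "s = a i" "a j < a i"
        using T S after j unfolding inf_subsets_def N_def by blast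
      then have "Suc j \<le> i"
        using a_mono strict_mono_less by (metis Suc_leI)
      then show "s \<in> X (Suc j)"
        using a_in[of i] X_antimono i(1) by blast
    qed
    then have "S \<in> inf_subsets (X (Suc j))"
      using S unfolding inf_subsets_def by auto
    then show "R c S"
      using X_R j unfolding a_def by blast
  qed
  then show "\<exists>N\<in>inf_subsets M. \<forall>T\<in>inf_subsets N.
      \<forall>c\<in>T. \<forall>S\<in>inf_subsets T. (\<forall>s\<in>S. c < s) \<longrightarrow> R c S"
    using N by blast
qed

section \<open>Repeated averages\<close>

lemma msets_subset: "infinite L \<Longrightarrow> msets g L k \<subseteq> L \<and> infinite (msets g L k)"
  by (induction k) (auto simp: infinite_tail)

lemma msets_cong:
  assumes "infinite L" and "\<And>P. P \<subseteq> L \<Longrightarrow> infinite P \<Longrightarrow> g P = g' P"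
  shows "msets g L k = msets g' L k"
proof (induction k)
  case (Suc k)
  then show ?case
    using assms msets_subset[OF assms(1), of g k] by simp
qed simp

lemma ravg_unfold: "ravg beta x = ravg_step beta (cut (ravg beta) {(x, y). x < y} x) x"
  unfolding ravg_def by (rule wfrec[OF wf])

lemma ravg_ozero: "ravg beta ozero L n = unitvec (enumerate L (n - 1))"
  by (subst ravg_unfold) (simp add: ravg_step_def)

definition ravg_first :: "('o::wellorder \<Rightarrow> nat \<Rightarrow> 'o) \<Rightarrow> 'o \<Rightarrow> nat set \<Rightarrow> nat \<Rightarrow> real" where
  "ravg_first beta x P =
    (if is_succ x
     then (\<lambda>j. (1 / real (minset P)) * (\<Sum>i = 1..minset P. ravg beta (opred x) P i j))
     else ravg beta (osucc (beta x (minset P))) P 1)"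

lemma ravg_msets:
  assumes f: "fund_seq beta" and x: "x \<noteq> ozero" and L: "L \<in> inf_subsets posnat"
  shows "ravg beta x L n = ravg_first beta x (msets (ravg_first beta x) L (n - 1))"
proof (cases x rule: ordinal_cases)
  case 2
  have "ravg_first beta x =
      (\<lambda>P j. (1 / real (minset P)) * (\<Sum>i = 1..minset P. ravg beta (opred x) P i j))"
    using 2 by (simp add: ravg_first_def fun_eq_iff)
  then show ?thesis
    using x 2 is_succ_opred(1)[OF 2]
    by (subst ravg_unfold) (simp add: ravg_step_def cut_apply Let_def)
next
  case 3
  let ?g = "\<lambda>P. cut (ravg beta) {(x, y). x < y} x (osucc (beta x (minset P))) P 1"
  have not_succ: "\<not> is_succ x"
    using 3 unfolding is_limit_def by simp
  have g: "?g P = ravg_first beta x P" if "P \<subseteq> L" "infinite P" for P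
  proof -
    have "1 \<le> minset P"
      using that L minset_pos unfolding inf_subsets_def by auto
    then show ?thesis
      using fund_seq_limit_less[OF f 3] not_succ by (simp add: cut_apply ravg_first_def)
  qed
  have inf: "infinite L"
    using L unfolding inf_subsets_def by simp
  have "ravg beta x L n = ?g (msets ?g L (n - 1))"
    using x not_succ by (subst ravg_unfold) (simp add: ravg_step_def Let_def)
  also have "msets ?g L (n - 1) = msets (ravg_first beta x) L (n - 1)"
    by (rule msets_cong[OF inf g])
  also have "?g \<dots> = ravg_first beta x \<dots>"
    using msets_subset[OF inf] g by blast
  finally show ?thesis .
qed (use x in simp)

lemma ravg_one:
  "fund_seq beta \<Longrightarrow> x \<noteq> ozero \<Longrightarrow> L \<in> inf_subsets posnat \<Longrightarrow> ravg beta x L 1 = ravg_first beta x L"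
  using ravg_msets[of beta x L 1] by simp

lemma ravg_one_succ:
  assumes "fund_seq beta" "is_succ x" "L \<in> inf_subsets posnat"
  shows "ravg beta x L 1 =
    (\<lambda>j. (1 / real (minset L)) * (\<Sum>i = 1..minset L. ravg beta (opred x) L i j))"
  using ravg_one[OF assms(1) is_succ_nonzero[OF assms(2)] assms(3)] assms(2)
  by (simp add: ravg_first_def)

lemma ravg_one_limit:
  assumes "fund_seq beta" "is_limit x" "L \<in> inf_subsets posnat"
  shows "ravg beta x L 1 = ravg beta (osucc (beta x (minset L))) L 1"
  using ravg_one[OF assms(1) _ assms(3), of x] assms(2)
  by (simp add: ravg_first_def is_limit_def)

lemma msupp_unitvec [simp]: "msupp (unitvec m) = {m}"
  by (auto simp: msupp_def unitvec_def)

lemma ravg_Suc: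
  assumes f: "fund_seq beta" and L: "L \<in> inf_subsets posnat" and n: "1 \<le> n"
  shows "ravg beta x L (Suc n) = ravg beta x {m\<in>L. Max (msupp (ravg beta x L n)) < m} 1"
proof (cases "x = ozero")
  case True
  have inf: "infinite L"
    using L unfolding inf_subsets_def by simp
  have "enumerate L (Suc (n - 1)) = (LEAST m. m \<in> L \<and> enumerate L (n - 1) < m)"
    by (rule enumerate_Suc''[OF inf])
  then show ?thesis
    using True n by (simp add: ravg_ozero enumerate_0)
next
  case False
  let ?g = "ravg_first beta x"
  let ?T = "{m\<in>L. Max (msupp (ravg beta x L n)) < m}"
  have T: "?T \<in> inf_subsets posnat"
    using tail_in_inf_subsets[OF L] L inf_subsets_trans by blast
  have "msets ?g L n = {m\<in>L. Max (msupp (?g (msets ?g L (n - 1)))) < m}"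
    using n by (metis Suc_diff_le diff_Suc_1 msets.simps(2))
  then have "msets ?g L n = ?T"
    using ravg_msets[OF f False L, of n] by simp
  then show ?thesis
    using ravg_msets[OF f False L, of "Suc n"] ravg_one[OF f False T] by simp
qed

lemma ravg_eq_ravg_one:
  assumes f: "fund_seq beta" and L: "L \<in> inf_subsets posnat" and n: "1 \<le> n"
  shows "\<exists>T\<in>inf_subsets L. ravg beta x L n = ravg beta x T 1"
  using n
proof (induction n rule: dec_induct)
  case base
  then show ?case
    using inf_subsets_self[OF L] by blast
next
  case (step n)
  then show ?case
    using ravg_Suc[OF f L, of n x] tail_in_inf_subsets[OF L] by auto
qed

section \<open>Schreier families\<close>

lemma schreier_unfold:
  "schreier beta x = schreier_step beta (cut (schreier beta) {(x, y). x < y} x) x"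
  unfolding schreier_def by (rule wfrec[OF wf])

lemma schreier_ozero: "schreier beta ozero = {{n} | n. n \<in> posnat} \<union> {{}}"
  by (subst schreier_unfold) (simp add: schreier_step_def)

lemma schreier_succ:
  assumes "is_succ x" and "F \<in> schreier beta x" and "F \<noteq> {}"
  obtains Fs where "F = \<Union>(set Fs)" "Fs \<noteq> []" "length Fs \<le> Min (hd Fs)"
    "sorted_wrt (\<lambda>F G. Max F < Min G) Fs" "\<And>G. G \<in> set Fs \<Longrightarrow> G \<in> schreier beta (opred x) \<and> G \<noteq> {}"
  using assms is_succ_nonzero[OF assms(1)] is_succ_opred(1)[OF assms(1)]
  by (subst (asm) schreier_unfold) (auto simp: schreier_step_def cut_apply)

lemma schreier_limit:
  assumes "fund_seq beta" and "is_limit x" and "F \<in> schreier beta x" and "F \<noteq> {}"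
  obtains n where "1 \<le> n" "n \<le> Min F" "F \<in> schreier beta (osucc (beta x n))"
  using assms fund_seq_limit_less[OF assms(1,2)]
  by (subst (asm) schreier_unfold) (auto simp: schreier_step_def cut_apply is_limit_def)

lemma empty_in_schreier: "{} \<in> schreier beta x"
  by (subst schreier_unfold) (simp add: schreier_step_def)

lemma finite_schreier:
  assumes f: "fund_seq beta"
  shows "F \<in> schreier beta x \<Longrightarrow> finite F"
proof (induction x arbitrary: F rule: less_induct)
  case (less x)
  show ?case
  proof (cases "F = {}")
    case False
    show ?thesis
    proof (cases x rule: ordinal_cases)
      case 1
      then show ?thesis
        using less.prems by (auto simp: schreier_ozero)
    next
      case 2
      then obtain Fs where "F = \<Union>(set Fs)" "\<And>G. G \<in> set Fs \<Longrightarrow> G \<in> schreier beta (opred x)"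
        using schreier_succ less.prems False by metis
      then show ?thesis
        using less.IH[OF is_succ_opred(1)[OF 2]] by auto
    next
      case 3
      then show ?thesis
        using schreier_limit[OF f 3 less.prems False] less.IH[OF fund_seq_limit_less[OF f 3]] by metis
    qed
  qed simp
qed

definition schreier_bounded ::
  "('o::wellorder \<Rightarrow> nat \<Rightarrow> 'o) \<Rightarrow> 'o \<Rightarrow> real \<Rightarrow> (nat \<Rightarrow> real) \<Rightarrow> bool" where
  "schreier_bounded beta z e mu \<longleftrightarrow> (\<forall>F\<in>schreier beta z. sum mu F \<le> e)"

definition schreier_bounded_early ::
  "('o::wellorder \<Rightarrow> nat \<Rightarrow> 'o) \<Rightarrow> 'o \<Rightarrow> nat \<Rightarrow> real \<Rightarrow> (nat \<Rightarrow> real) \<Rightarrow> bool" where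
  "schreier_bounded_early beta z c e mu \<longleftrightarrow> (\<forall>F\<in>schreier beta z. (\<exists>f\<in>F. f \<le> c) \<longrightarrow> sum mu F \<le> e)"

lemma schreier_bounded_imp_early:
  "schreier_bounded beta z e mu \<Longrightarrow> schreier_bounded_early beta z c e mu"
  unfolding schreier_bounded_def schreier_bounded_early_def by blast

lemma schreier_bounded_early_mono:
  "schreier_bounded_early beta z c e mu \<Longrightarrow> e \<le> e' \<Longrightarrow> schreier_bounded_early beta z c e' mu"
  unfolding schreier_bounded_early_def by force

lemma schreier_bounded_early_ozero:
  "0 \<le> e \<Longrightarrow> (\<And>j. j \<le> c \<Longrightarrow> mu j = 0) \<Longrightarrow> schreier_bounded_early beta ozero c e mu"
  unfolding schreier_bounded_early_def schreier_ozero by auto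

lemma sum_Union_le:
  fixes h :: "'a \<Rightarrow> real"
  assumes "finite S" "\<And>G. G \<in> S \<Longrightarrow> finite G" "\<And>j. 0 \<le> h j"
  shows "sum h (\<Union>S) \<le> (\<Sum>G\<in>S. sum h G)"
  using assms
proof (induction S rule: finite_induct)
  case (insert G S)
  have "sum h (\<Union>(insert G S)) \<le> sum h G + sum h (\<Union>S)"
    using sum_Un[of G "\<Union>S" h] insert.prems by (simp add: sum_nonneg insert.hyps)
  also have "\<dots> \<le> sum h G + (\<Sum>G\<in>S. sum h G)"
    using insert by simp
  finally show ?case
    using insert.hyps by simp
qed simp

text \<open>A set of \<open>S\<^sub>x\<close> with minimum \<open>\<le> c\<close> is a union of at most \<open>c\<close> sets of
  \<open>S\<^sub>x\<^sub>-\<^sub>1\<close>.\<close>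
lemma schreier_bounded_early_succ:
  assumes f: "fund_seq beta" and x: "is_succ x" and nonneg: "\<And>j. 0 \<le> mu j" and e: "0 \<le> e"
    and bounded: "schreier_bounded beta (opred x) e mu"
  shows "schreier_bounded_early beta x c (real c * e) mu"
  unfolding schreier_bounded_early_def
proof (intro ballI impI)
  fix F assume F: "F \<in> schreier beta x" and "\<exists>f\<in>F. f \<le> c"
  then obtain f where f_in: "f \<in> F" and "f \<le> c"
    by blast
  then obtain Fs where Fs: "F = \<Union>(set Fs)" "Fs \<noteq> []" "length Fs \<le> Min (hd Fs)"
    "sorted_wrt (\<lambda>F G. Max F < Min G) Fs" "\<And>G. G \<in> set Fs \<Longrightarrow> G \<in> schreier beta (opred x) \<and> G \<noteq> {}"
    using schreier_succ[OF x F] by blast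
  have fin: "finite G" if "G \<in> set Fs" for G
    using Fs(5) finite_schreier[OF f] that by blast
  obtain G where G: "G \<in> set Fs" "f \<in> G"
    using Fs(1) f_in by blast
  obtain H rest where H: "Fs = H # rest"
    using Fs(2) by (cases Fs) auto
  have "Min H \<le> Min G"
  proof (cases "G = H")
    case False
    then have "Max H < Min G"
      using G(1) H Fs(4) by simp
    moreover have "Min H \<le> Max H"
      using H Fs(5) fin[of H] by simp
    ultimately show ?thesis
      by simp
  qed simp
  also have "Min G \<le> f"
    using G fin by simp
  finally have "length Fs \<le> c"
    using Fs(3) H \<open>f \<le> c\<close> by simp
  have "sum mu F \<le> (\<Sum>G\<in>set Fs. sum mu G)"
    unfolding Fs(1) by (rule sum_Union_le) (use fin nonneg in auto)
  also have "\<dots> \<le> real (card (set Fs)) * e"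
    by (rule sum_bounded_above) (use bounded Fs(5) in \<open>auto simp: schreier_bounded_def\<close>)
  also have "\<dots> \<le> real c * e"
    using card_length[of Fs] \<open>length Fs \<le> c\<close> e by (intro mult_right_mono) auto
  finally show "sum mu F \<le> real c * e" .
qed

lemma schreier_bounded_early_limit:
  assumes f: "fund_seq beta" and x: "is_limit x"
    and bounded: "\<And>n. 1 \<le> n \<Longrightarrow> n \<le> c \<Longrightarrow> schreier_bounded beta (osucc (beta x n)) e mu"
  shows "schreier_bounded_early beta x c e mu"
  unfolding schreier_bounded_early_def
proof (intro ballI impI)
  fix F assume F: "F \<in> schreier beta x" and "\<exists>f\<in>F. f \<le> c"
  then obtain f where "f \<in> F" "f \<le> c"
    by blast
  moreover obtain n where "1 \<le> n" "n \<le> Min F" "F \<in> schreier beta (osucc (beta x n))"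
    using schreier_limit[OF f x F] \<open>f \<in> F\<close> by blast
  moreover have "Min F \<le> f"
    using finite_schreier[OF f F] \<open>f \<in> F\<close> by simp
  ultimately show "sum mu F \<le> e"
    using bounded unfolding schreier_bounded_def by auto
qed

section \<open>Supports and masses of repeated averages\<close>

definition subprob_on :: "nat set \<Rightarrow> (nat \<Rightarrow> real) \<Rightarrow> bool" where
  "subprob_on T mu \<longleftrightarrow> (\<forall>j. 0 \<le> mu j) \<and> (\<forall>F. sum mu F \<le> 1) \<and>
     finite (msupp mu) \<and> msupp mu \<noteq> {} \<and> msupp mu \<subseteq> T"

lemma subprob_on_mono: "subprob_on S mu \<Longrightarrow> S \<subseteq> T \<Longrightarrow> subprob_on T mu"
  unfolding subprob_on_def by blast

lemma subprob_on_unitvec: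
  assumes "m \<in> T"
  shows "subprob_on T (unitvec m)"
proof -
  have "sum (unitvec m) F \<le> 1" for F
    by (cases "finite F") (simp_all add: unitvec_def sum.delta)
  moreover have "0 \<le> unitvec m j" for j
    by (simp add: unitvec_def)
  ultimately show ?thesis
    using assms unfolding subprob_on_def by simp
qed

lemma subprob_on_average:
  assumes k: "1 \<le> k" and mu: "\<And>i. i \<in> {1..k} \<Longrightarrow> subprob_on T (mu i)"
  shows "subprob_on T (\<lambda>j. (1 / real k) * (\<Sum>i = 1..k. mu i j))"
    (is "subprob_on T ?avg")
proof -
  have "0 \<le> (\<Sum>i = 1..k. mu i j)" for j
    by (rule sum_nonneg) (use mu in \<open>auto simp: subprob_on_def\<close>)
  then have nonneg: "0 \<le> ?avg j" for j
    by simp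
  have "sum ?avg F = (1 / real k) * (\<Sum>i = 1..k. sum (mu i) F)" for F
    by (simp add: sum_distrib_left sum.swap[of _ F])
  also have "\<dots> F \<le> (1 / real k) * (\<Sum>i = 1..k. 1)" for F
    using mu by (intro mult_left_mono sum_mono) (auto simp: subprob_on_def)
  finally have le_one: "sum ?avg F \<le> 1" for F
    using k by simp
  have supp: "msupp ?avg \<subseteq> (\<Union>i\<in>{1..k}. msupp (mu i))"
  proof
    fix j assume "j \<in> msupp ?avg"
    then have "(\<Sum>i = 1..k. mu i j) \<noteq> 0"
      by (simp add: msupp_def)
    then obtain i where "i \<in> {1..k}" "mu i j \<noteq> 0"
      by (meson sum.neutral)
    then show "j \<in> (\<Union>i\<in>{1..k}. msupp (mu i))"
      by (auto simp: msupp_def)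
  qed
  have fin_i: "finite (msupp (mu i))" and sub_i: "msupp (mu i) \<subseteq> T" if "i \<in> {1..k}" for i
    using mu[OF that] unfolding subprob_on_def by simp_all
  have fin: "finite (msupp ?avg)"
    by (rule finite_subset[OF supp]) (use fin_i in simp)
  have sub: "msupp ?avg \<subseteq> T"
    using supp sub_i by blast
  obtain j where j: "j \<in> msupp (mu 1)"
    using mu[of 1] k by (auto simp: subprob_on_def)
  have "0 < mu 1 j"
    using j mu[of 1] k by (auto simp: subprob_on_def msupp_def order_less_le)
  also have "mu 1 j \<le> (\<Sum>i = 1..k. mu i j)"
    by (rule member_le_sum) (use mu k in \<open>auto simp: subprob_on_def\<close>)
  finally have "j \<in> msupp ?avg"
    using k by (simp add: msupp_def)
  then show ?thesis
    unfolding subprob_on_def using nonneg le_one fin sub by blast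
qed

lemma ravg_subprob_on:
  assumes f: "fund_seq beta"
  shows "L \<in> inf_subsets posnat \<Longrightarrow> 1 \<le> n \<Longrightarrow> subprob_on L (ravg beta x L n)"
proof (induction x arbitrary: L n rule: less_induct)
  case (less x)
  have first: "subprob_on T (ravg beta x T 1)" if T: "T \<in> inf_subsets posnat" for T
  proof (cases x rule: ordinal_cases)
    case 1
    then show ?thesis
      using minset_in[OF T] by (simp add: ravg_ozero enumerate_0 subprob_on_unitvec minset_def)
  next
    case 2
    have "subprob_on T (\<lambda>j. (1 / real (minset T)) * (\<Sum>i = 1..minset T. ravg beta (opred x) T i j))"
      using less.IH[OF is_succ_opred(1)[OF 2] T] minset_pos[OF T]
      by (intro subprob_on_average) auto
    then show ?thesis
      using ravg_one_succ[OF f 2 T] by simp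
  next
    case 3
    then show ?thesis
      using ravg_one_limit[OF f 3 T] less.IH[OF fund_seq_limit_less[OF f 3 minset_pos[OF T]] T]
      by simp
  qed
  obtain T where T: "T \<in> inf_subsets L" and eq: "ravg beta x L n = ravg beta x T 1"
    using ravg_eq_ravg_one[OF f less.prems] by blast
  have "T \<subseteq> L"
    using T unfolding inf_subsets_def by simp
  then show ?case
    using first[OF inf_subsets_trans[OF less.prems(1) T]] eq subprob_on_mono by metis
qed

lemma ravg_nonneg:
  "fund_seq beta \<Longrightarrow> L \<in> inf_subsets posnat \<Longrightarrow> 1 \<le> n \<Longrightarrow> 0 \<le> ravg beta x L n j"
  using ravg_subprob_on unfolding subprob_on_def by blast

lemma ravg_support_after:
  assumes f: "fund_seq beta" and L: "L \<in> inf_subsets posnat" and n: "1 \<le> n"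
    and j: "j \<in> msupp (ravg beta x L (Suc n))"
  shows "Max (msupp (ravg beta x L n)) < j"
proof -
  let ?T = "{m\<in>L. Max (msupp (ravg beta x L n)) < m}"
  have "?T \<in> inf_subsets posnat"
    using tail_in_inf_subsets[OF L] L inf_subsets_trans by blast
  then have "msupp (ravg beta x ?T 1) \<subseteq> ?T"
    using ravg_subprob_on[OF f] unfolding subprob_on_def by blast
  then show ?thesis
    using j ravg_Suc[OF f L n] by auto
qed

lemma ravg_Max_support_mono:
  assumes f: "fund_seq beta" and L: "L \<in> inf_subsets posnat" and "1 \<le> i" "i \<le> i'"
  shows "Max (msupp (ravg beta x L i)) \<le> Max (msupp (ravg beta x L i'))"
  using assms(4)
proof (induction i' rule: dec_induct)
  case (step n)
  have "Max (msupp (ravg beta x L (Suc n))) \<in> msupp (ravg beta x L (Suc n))"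
    using ravg_subprob_on[OF f L, of "Suc n" x] by (simp add: subprob_on_def)
  then have "Max (msupp (ravg beta x L n)) < Max (msupp (ravg beta x L (Suc n)))"
    using ravg_support_after[OF f L] step.hyps assms(3) by simp
  then show ?case
    using step.IH by simp
qed simp

section \<open>The averaging estimate\<close>

lemma sum_le_after_first_nonzero:
  fixes a :: "nat \<Rightarrow> real"
  assumes I: "finite I" and a01: "\<And>i. i \<in> I \<Longrightarrow> 0 \<le> a i \<and> a i \<le> 1"
    and later: "\<And>i j. i \<in> I \<Longrightarrow> j \<in> I \<Longrightarrow> j < i \<Longrightarrow> a j \<noteq> 0 \<Longrightarrow> a i \<le> d" and d: "0 \<le> d"
  shows "sum a I \<le> 1 + real (card I) * d"
proof (cases "\<exists>i\<in>I. a i \<noteq> 0")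
  case True
  define j where "j = Min {i\<in>I. a i \<noteq> 0}"
  have j: "j \<in> I" "a j \<noteq> 0"
    using Min_in[of "{i\<in>I. a i \<noteq> 0}"] I True unfolding j_def by auto
  have "a i \<le> d" if "i \<in> I - {j}" for i
  proof (cases "i < j")
    case True
    have "a i = 0"
    proof (rule ccontr)
      assume "a i \<noteq> 0"
      then have "j \<le> i"
        using that I unfolding j_def by (intro Min_le) auto
      then show False
        using True by simp
    qed
    then show ?thesis
      using d by simp
  next
    case False
    then show ?thesis
      using that j later[of i j] by simp
  qed
  then have "sum a (I - {j}) \<le> real (card (I - {j})) * d"
    by (rule sum_bounded_above)
  also have "\<dots> \<le> real (card I) * d"
    using I d by (intro mult_right_mono) (simp_all add: card_Diff1_le)
  finally show ?thesis
    using sum.remove[OF I j(1), of a] a01[OF j(1)] by simp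
next
  case False
  then show ?thesis
    using d by simp
qed

lemma schreier_bounded_mono:
  "schreier_bounded beta z e mu \<Longrightarrow> e \<le> e' \<Longrightarrow> schreier_bounded beta z e' mu"
  unfolding schreier_bounded_def by force

text \<open>Once some \<open>\<eta>\<^sub>j\<^sup>L\<close> charges \<open>F\<close>, every later \<open>\<eta>\<^sub>i\<^sup>L\<close> is a first measure
  built beyond a point of \<open>L\<close> that is at least \<open>min F\<close>.\<close>
lemma ravg_sum_bounded_after_charge:
  assumes f: "fund_seq beta" and L: "L \<in> inf_subsets posnat"
    and early: "\<And>c T. c \<in> L \<Longrightarrow> T \<in> inf_subsets L \<Longrightarrow> \<forall>t\<in>T. c < t \<Longrightarrow>
      schreier_bounded_early beta z c d (ravg beta eta T 1)"
    and F: "F \<in> schreier beta z" and j: "1 \<le> j" "j < i"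
    and charged: "sum (ravg beta eta L j) F \<noteq> 0"
  shows "sum (ravg beta eta L i) F \<le> d"
proof -
  let ?mu = "ravg beta eta L"
  let ?c = "Max (msupp (?mu (i - 1)))"
  let ?T = "{m\<in>L. ?c < m}"
  have sub: "subprob_on L (?mu n)" if "1 \<le> n" for n
    using ravg_subprob_on[OF f L that] .
  obtain f where f_in: "f \<in> F" and "?mu j f \<noteq> 0"
    using charged by (meson sum.neutral)
  then have "f \<le> Max (msupp (?mu j))"
    using sub[OF j(1)] by (simp add: subprob_on_def msupp_def)
  also have "\<dots> \<le> ?c"
    using ravg_Max_support_mono[OF f L] j by simp
  finally have "\<exists>f\<in>F. f \<le> ?c"
    using f_in by blast
  moreover have "1 \<le> i - 1"
    using j by simp
  then have "?c \<in> L"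
    using sub[of "i - 1"] Max_in unfolding subprob_on_def by blast
  moreover have "?mu i = ravg beta eta ?T 1"
    using ravg_Suc[OF f L, of "i - 1"] j by simp
  ultimately show ?thesis
    using early[of ?c ?T] F tail_in_inf_subsets[OF L]
    unfolding schreier_bounded_early_def by simp
qed

lemma average_schreier_bounded:
  assumes f: "fund_seq beta" and L: "L \<in> inf_subsets posnat" and k: "1 \<le> k" and d: "0 \<le> d"
    and early: "\<And>c T. c \<in> L \<Longrightarrow> T \<in> inf_subsets L \<Longrightarrow> \<forall>t\<in>T. c < t \<Longrightarrow>
      schreier_bounded_early beta z c d (ravg beta eta T 1)"
  shows "schreier_bounded beta z (1 / real k + d)
    (\<lambda>j. (1 / real k) * (\<Sum>i = 1..k. ravg beta eta L i j))"
  unfolding schreier_bounded_def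
proof
  fix F assume F: "F \<in> schreier beta z"
  let ?mu = "ravg beta eta L"
  define a where "a i = sum (?mu i) F" for i
  have a01: "0 \<le> a i \<and> a i \<le> 1" if "i \<in> {1..k}" for i
    using ravg_subprob_on[OF f L, of i eta] that
    unfolding a_def subprob_on_def by (auto intro: sum_nonneg)
  have later: "a i \<le> d" if "i \<in> {1..k}" "j \<in> {1..k}" "j < i" "a j \<noteq> 0" for i j
    using ravg_sum_bounded_after_charge[OF f L early F] that unfolding a_def by simp
  have "(\<Sum>j\<in>F. (1 / real k) * (\<Sum>i = 1..k. ?mu i j)) = (1 / real k) * (\<Sum>i = 1..k. a i)"
    unfolding a_def by (simp add: sum_distrib_left sum.swap[of _ F])
  also have "\<dots> \<le> (1 / real k) * (1 + real k * d)"
    using sum_le_after_first_nonzero[of "{1..k}" a d] a01 later d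
    by (intro mult_left_mono) auto
  also have "\<dots> = 1 / real k + d"
    using k by (simp add: field_simps)
  finally show "(\<Sum>j\<in>F. (1 / real k) * (\<Sum>i = 1..k. ?mu i j)) \<le> 1 / real k + d" .
qed

lemma refinable_schreier_bounded_early:
  assumes f: "fund_seq beta" and d: "0 < d" and z: "z \<le> eta"
    and IH: "\<And>z' e. z' < eta \<Longrightarrow> 0 < e \<Longrightarrow>
      refinable (\<lambda>T. schreier_bounded beta z' e (ravg beta eta T 1))"
  shows "refinable (\<lambda>T. schreier_bounded_early beta z c d (ravg beta eta T 1))"
proof (cases "z < eta")
  case True
  show ?thesis
    by (rule refinable_mono[OF IH[OF True d]]) (rule schreier_bounded_imp_early)
next
  case False
  then have z_eq: "z = eta"
    using z by simp
  show ?thesis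
  proof (cases eta rule: ordinal_cases)
    case 1
    have "schreier_bounded_early beta z c d (ravg beta eta T 1)"
      if T: "T \<in> inf_subsets posnat" and after: "\<forall>t\<in>T. c < t" for T
    proof -
      have "c < minset T"
        using after minset_in[OF T] by blast
      then show ?thesis
        unfolding z_eq 1 using d
        by (intro schreier_bounded_early_ozero) (simp_all add: ravg_ozero enumerate_0 minset_def unitvec_def)
    qed
    then show ?thesis
      by (rule refinable_mono[OF refinable_tail])
  next
    case 2
    let ?e = "d / (real c + 1)"
    have "0 < ?e"
      using d by simp
    then show ?thesis
    proof (rule refinable_mono[OF IH[OF is_succ_opred(1)[OF 2]]])
      fix T assume T: "T \<in> inf_subsets posnat"
        and bounded: "schreier_bounded beta (opred eta) ?e (ravg beta eta T 1)"
      have "schreier_bounded_early beta eta c (real c * ?e) (ravg beta eta T 1)"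
        using schreier_bounded_early_succ[OF f 2 ravg_nonneg[OF f T] _ bounded] d by simp
      moreover have "real c * ?e \<le> d"
        using d by (simp add: field_simps)
      ultimately show "schreier_bounded_early beta z c d (ravg beta eta T 1)"
        unfolding z_eq by (rule schreier_bounded_early_mono)
    qed
  next
    case 3
    have "refinable (\<lambda>T. \<forall>n\<in>{1..c}. schreier_bounded beta (osucc (beta eta n)) d (ravg beta eta T 1))"
      by (rule refinable_finite_Ball) (use IH[OF fund_seq_limit_less[OF f 3] d] in auto)
    then show ?thesis
    proof (rule refinable_mono)
      fix T assume "\<forall>n\<in>{1..c}. schreier_bounded beta (osucc (beta eta n)) d (ravg beta eta T 1)"
      then show "schreier_bounded_early beta z c d (ravg beta eta T 1)"
        using schreier_bounded_early_limit[OF f 3] z_eq by simp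
    qed
  qed
qed

text \<open>Shared by successors (\<open>eta a = x - 1\<close>) and limits (\<open>eta a = beta x a\<close> for
  large \<open>a\<close>): diagonalise so that the early bounds for \<open>eta a\<close> hold for all
  \<open>a \<le> c\<close> beyond each \<open>c\<close>, and keep only elements \<open>> 2/e\<close>, so that the single
  large term of the average weighs at most \<open>e/2\<close>.\<close>
lemma refinable_schreier_bounded_average:
  assumes f: "fund_seq beta" and e: "0 < e"
    and early: "\<And>a c. a\<^sub>0 \<le> a \<Longrightarrow>
      refinable (\<lambda>T. schreier_bounded_early beta z c (e / 2) (ravg beta (eta a) T 1))"
    and average: "\<And>L. L \<in> inf_subsets posnat \<Longrightarrow> a\<^sub>0 \<le> minset L \<Longrightarrow>
      ravg beta x L 1 = (\<lambda>j. (1 / real (minset L)) *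
        (\<Sum>i = 1..minset L. ravg beta (eta (minset L)) L i j))"
  shows "refinable (\<lambda>T. schreier_bounded beta z e (ravg beta x T 1))"
proof -
  let ?R = "\<lambda>c T. \<forall>a\<in>{a\<^sub>0..c}. schreier_bounded_early beta z c (e / 2) (ravg beta (eta a) T 1)"
  let ?b = "max a\<^sub>0 (nat \<lceil>2 / e\<rceil>)"
  have "refinable (\<lambda>T. \<forall>c\<in>T. \<forall>S\<in>inf_subsets T. (\<forall>s\<in>S. c < s) \<longrightarrow> ?R c S)"
    by (rule refinable_diagonal, rule refinable_finite_Ball) (use early in auto)
  then have both: "refinable (\<lambda>T. (\<forall>c\<in>T. \<forall>S\<in>inf_subsets T. (\<forall>s\<in>S. c < s) \<longrightarrow> ?R c S) \<and> (\<forall>t\<in>T. ?b < t))"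
    using refinable_tail by (rule refinable_conj)
  have bounded: "schreier_bounded beta z e (ravg beta x T 1)"
    if T: "T \<in> inf_subsets posnat" and diag: "\<forall>c\<in>T. \<forall>S\<in>inf_subsets T. (\<forall>s\<in>S. c < s) \<longrightarrow> ?R c S"
      and tail: "\<forall>t\<in>T. ?b < t" for T
  proof -
    let ?k = "minset T"
    have k: "?b < ?k"
      using tail minset_in[OF T] by blast
    have "schreier_bounded beta z (1 / real ?k + e / 2)
        (\<lambda>j. (1 / real ?k) * (\<Sum>i = 1..?k. ravg beta (eta ?k) T i j))"
    proof (rule average_schreier_bounded[OF f T minset_pos[OF T]])
      show "schreier_bounded_early beta z c (e / 2) (ravg beta (eta ?k) S 1)"
        if "c \<in> T" "S \<in> inf_subsets T" "\<forall>s\<in>S. c < s" for c S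
        using diag that k minset_le[OF \<open>c \<in> T\<close>] by auto
    qed (use e in simp)
    moreover have "1 / real ?k \<le> e / 2"
    proof -
      have "2 / e \<le> real ?k"
        using k by linarith
      then show ?thesis
        using e k by (simp add: field_simps)
    qed
    ultimately show ?thesis
      using average[OF T] k schreier_bounded_mono[of beta z _ _ e] by simp
  qed
  show ?thesis
    by (rule refinable_mono[OF both]) (use bounded in blast)
qed

lemma refinable_schreier_bounded:
  assumes f: "fund_seq beta"
  shows "z < x \<Longrightarrow> 0 < e \<Longrightarrow> refinable (\<lambda>T. schreier_bounded beta z e (ravg beta x T 1))"
proof (induction x arbitrary: z e rule: less_induct)
  case (less x)
  have e2: "0 < e / 2"
    using less.prems(2) by simp
  show ?case
  proof (cases x rule: ordinal_cases)
    case 1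
    then show ?thesis
      using less.prems(1) ozero_le[of z] by (simp add: leD)
  next
    case 2
    have z: "z \<le> opred x"
      using less.prems(1) is_succ_opred(2)[OF 2] less_osucc_imp_le by metis
    show ?thesis
    proof (rule refinable_schreier_bounded_average[OF f less.prems(2), where eta = "\<lambda>_. opred x" and a\<^sub>0 = 0])
      show "refinable (\<lambda>T. schreier_bounded_early beta z c (e / 2) (ravg beta (opred x) T 1))" for c
        by (rule refinable_schreier_bounded_early[OF f e2 z less.IH[OF is_succ_opred(1)[OF 2]]])
      show "ravg beta x L 1 = (\<lambda>j. (1 / real (minset L)) * (\<Sum>i = 1..minset L. ravg beta (opred x) L i j))"
        if "L \<in> inf_subsets posnat" for L
        using ravg_one_succ[OF f 2 that] .
    qed
  next
    case 3
    obtain a0 where a0: "\<And>a. a0 \<le> a \<Longrightarrow>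
        1 \<le> a \<and> z \<le> beta x a \<and> beta x a < osucc (beta x a) \<and> osucc (beta x a) < x"
      using fund_seq_limit_eventually[OF f 3 less.prems(1)] by blast
    show ?thesis
    proof (rule refinable_schreier_bounded_average[OF f less.prems(2), where eta = "beta x" and a\<^sub>0 = a0])
      fix a c assume "a0 \<le> a"
      then have "z \<le> beta x a" and "beta x a < x"
        using a0[of a] by auto
      then show "refinable (\<lambda>T. schreier_bounded_early beta z c (e / 2) (ravg beta (beta x a) T 1))"
        using refinable_schreier_bounded_early[OF f e2] less.IH by blast
    next
      fix L assume L: "L \<in> inf_subsets posnat" and "a0 \<le> minset L"
      then have "beta x (minset L) < osucc (beta x (minset L))"
        using a0 by blast
      then show "ravg beta x L 1 = (\<lambda>j. (1 / real (minset L)) *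
          (\<Sum>i = 1..minset L. ravg beta (beta x (minset L)) L i j))"
        using ravg_one_limit[OF f 3 L] ravg_one_succ[OF f _ L] is_succ_osucc by metis
    qed
  qed
qed

lemma schreier_norm_le:
  assumes "\<And>j. 0 \<le> mu j" and "schreier_bounded beta z e mu"
  shows "schreier_norm beta z mu \<le> e"
  unfolding schreier_norm_def
proof (rule cSUP_least)
  show "schreier beta z \<noteq> {}"
    using empty_in_schreier by blast
  show "(\<Sum>i\<in>F. \<bar>mu i\<bar>) \<le> e" if "F \<in> schreier beta z" for F
    using assms that unfolding schreier_bounded_def by simp
qed

theorem proposition2p15:
  fixes beta :: "'o::wellorder \<Rightarrow> nat \<Rightarrow> 'o" and M :: "nat set" and eps :: real
    and z x :: 'o
  assumes "\<forall>y::'o. countable {w. w < y}"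
    and "fund_seq beta"
    and "M \<in> inf_subsets posnat"
    and "eps > 0"
    and "z < x"
  shows "\<exists>N \<in> inf_subsets M. \<forall>L \<in> inf_subsets N. \<forall>n \<ge> 1.
           schreier_norm beta z (ravg beta x L n) < eps"
proof -
  note f = assms(2) and M = assms(3)
  have "0 < eps / 2"
    using assms(4) by simp
  then obtain N where N: "N \<in> inf_subsets M"
    and small: "\<And>T. T \<in> inf_subsets N \<Longrightarrow> schreier_bounded beta z (eps / 2) (ravg beta x T 1)"
    using refinableD[OF refinable_schreier_bounded[OF f assms(5)] M] by blast
  have "schreier_norm beta z (ravg beta x L n) < eps" if L: "L \<in> inf_subsets N" and n: "1 \<le> n" for L n
  proof -
    have L_pos: "L \<in> inf_subsets posnat"
      using inf_subsets_trans[OF inf_subsets_trans[OF M N] L] .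
    obtain T where T: "T \<in> inf_subsets L" and eq: "ravg beta x L n = ravg beta x T 1"
      using ravg_eq_ravg_one[OF f L_pos n] by blast
    have "schreier_norm beta z (ravg beta x T 1) \<le> eps / 2"
      using ravg_nonneg[OF f inf_subsets_trans[OF L_pos T]] small[OF inf_subsets_trans[OF L T]]
      by (intro schreier_norm_le) auto
    then show ?thesis
      using eq assms(4) by simp
  qed
  then show ?thesis
    using N by blast
qed

end
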